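(* Let $M\in\mathcal{F}$. Then there exist positive integers $n_1,\dots,n_k$ such that $M$ is the range of the cardinal function of the finite sequence $(n_1,\dots,n_k)$.
   Context: For a finite sequence $\mathbf{x}=(x_1,\dots,x_N)$ of positive reals, its achievement set is $\mathcal{A}(\mathbf{x})=\{\sum_{n\in A}x_n: A\subseteq\{1,\dots,N\}\}$ and its cardinal function $f_{\mathbf{x}}:\mathcal{A}(\mathbf{x})\to\mathbb{N}$ sends $x$ to the number of subsets $A\subseteq\{1,\dots,N\}$ with $\sum_{n\in A}x_n=x$ (terms with equal values at different positions are distinguished). $\mathcal{F}$ is the family of ranges of cardinal functions of finite sequences of positive reals. *)

theory Defs
  imports Complex_Main
begin

definition achievement_set :: "'a::comm_monoid_add list \<Rightarrow> 'a set" where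
  "achievement_set xs = {(\<Sum>n\<in>A. xs ! n) | A. A \<subseteq> {0..<length xs}}"

definition cardinal_fun :: "'a::comm_monoid_add list \<Rightarrow> 'a \<Rightarrow> nat" where
  "cardinal_fun xs x = card {A. A \<subseteq> {0..<length xs} \<and> (\<Sum>n\<in>A. xs ! n) = x}"

definition cardinal_range :: "'a::comm_monoid_add list \<Rightarrow> nat set" where
  "cardinal_range xs = cardinal_fun xs ` achievement_set xs"

definition family_F :: "nat set set" where
  "family_F = {cardinal_range xs | xs :: real list. \<forall>x\<in>set xs. x > 0}"

end

theory Submission
  imports Defs
begin

text \<open>The cardinal range of a sequence only depends on which pairs of index sets have equal
  sums. A sequence \<open>x\<close> of length \<open>L\<close> solves the finite system of linear conditions in
  \<open>y\<close>: \<open>\<Sum>\<^sub>A y = \<Sum>\<^sub>B y\<close> whenever \<open>\<Sum>\<^sub>A x = \<Sum>\<^sub>B x\<close>, \<open>\<Sum>\<^sub>A y > \<Sum>\<^sub>B y\<close> whenever \<open>\<Sum>\<^sub>A x > \<Sum>\<^sub>B x\<close>,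
  and \<open>y\<^sub>i > 0\<close>. Its coefficients are rational, so it also has a rational solution, and every
  solution has the same equality pattern of subset sums as \<open>x\<close>. Clearing denominators turns
  a rational solution into positive integers.\<close>

text \<open>An affine form \<open>c + \<Sum>\<^sub>i\<^sub><\<^sub>N a\<^sub>i z\<^sub>i\<close> in the variables \<open>z\<^sub>0, \<dots>, z\<^sub>N\<^sub>-\<^sub>1\<close> is represented by the
  pair \<open>(c, a)\<close>; the number \<open>N\<close> of variables is passed separately.\<close>

type_synonym aform = "real \<times> (nat \<Rightarrow> real)"

definition aform_eval :: "nat \<Rightarrow> aform \<Rightarrow> (nat \<Rightarrow> real) \<Rightarrow> real" where
  "aform_eval N f z = fst f + (\<Sum>i<N. snd f i * z i)"

definition rational_aform :: "aform \<Rightarrow> bool" where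
  "rational_aform f \<longleftrightarrow> fst f \<in> \<rat> \<and> (\<forall>i. snd f i \<in> \<rat>)"

definition aform_solves :: "nat \<Rightarrow> aform set \<Rightarrow> aform set \<Rightarrow> (nat \<Rightarrow> real) \<Rightarrow> bool" where
  "aform_solves N E P z \<longleftrightarrow> (\<forall>f\<in>E. aform_eval N f z = 0) \<and> (\<forall>f\<in>P. aform_eval N f z > 0)"

lemma aform_eval_upd [simp]: "aform_eval N f (z(N := t)) = aform_eval N f z"
  unfolding aform_eval_def by (auto intro!: sum.cong)

lemma aform_eval_Suc: "aform_eval (Suc N) f z = aform_eval N f z + snd f N * z N"
  unfolding aform_eval_def by simp

lemma aform_eval_rational:
  "rational_aform f \<Longrightarrow> (\<And>i. z i \<in> \<rat>) \<Longrightarrow> aform_eval N f z \<in> \<rat>"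
  unfolding aform_eval_def rational_aform_def by (auto intro!: Rats_add Rats_sum Rats_mult)

lemma aform_solves_image:
  assumes "\<And>f. aform_eval N (g f) z = aform_eval M f z'"
  shows "aform_solves N (g ` E) (g ` P) z \<longleftrightarrow> aform_solves M E P z'"
  unfolding aform_solves_def using assms by auto

lemma aform_solvesD:
  assumes "aform_solves N E P z"
  shows "f \<in> E \<Longrightarrow> aform_eval N f z = 0" and "f \<in> P \<Longrightarrow> aform_eval N f z > 0"
  using assms unfolding aform_solves_def by blast+

text \<open>Substitution of the value of \<open>z\<^sub>N\<close> determined by the equation \<open>e = 0\<close>.\<close>

definition aform_eliminate :: "aform \<Rightarrow> nat \<Rightarrow> aform \<Rightarrow> aform" where
  "aform_eliminate e N f =
     (fst f - snd f N * fst e / snd e N, \<lambda>j. snd f j - snd f N * snd e j / snd e N)"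

lemma aform_eval_eliminate:
  assumes "snd e N \<noteq> 0"
  shows "aform_eval N (aform_eliminate e N f) z
           = aform_eval (Suc N) f (z(N := - aform_eval N e z / snd e N))"
proof -
  have "aform_eval N (aform_eliminate e N f) z
          = aform_eval N f z - snd f N * aform_eval N e z / snd e N"
    unfolding aform_eval_def aform_eliminate_def
    by (simp add: algebra_simps sum_subtractf sum_distrib_left sum_divide_distrib
        add_divide_distrib)
  with assms show ?thesis
    by (simp add: aform_eval_Suc field_simps)
qed

lemma rational_aform_eliminate:
  "rational_aform e \<Longrightarrow> rational_aform f \<Longrightarrow> rational_aform (aform_eliminate e N f)"
  unfolding rational_aform_def aform_eliminate_def by (auto intro!: Rats_diff Rats_mult Rats_divide)

definition aform_instantiate :: "nat \<Rightarrow> real \<Rightarrow> aform \<Rightarrow> aform" where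
  "aform_instantiate N r f = (fst f + snd f N * r, snd f)"

lemma aform_eval_instantiate:
  "aform_eval N (aform_instantiate N r f) z = aform_eval (Suc N) f (z(N := r))"
  unfolding aform_eval_Suc aform_eval_upd by (simp add: aform_eval_def aform_instantiate_def)

lemma rational_aform_instantiate:
  "rational_aform f \<Longrightarrow> r \<in> \<rat> \<Longrightarrow> rational_aform (aform_instantiate N r f)"
  unfolding rational_aform_def aform_instantiate_def by auto

lemma ex_rational_update_keeps_pos:
  assumes "finite P" and pos: "\<forall>f\<in>P. aform_eval (Suc N) f x > 0"
  shows "\<exists>r\<in>\<rat>. \<forall>f\<in>P. aform_eval (Suc N) f (x(N := r)) > 0"
proof -
  have "\<forall>\<^sub>F r in nhds (x N). \<forall>f\<in>P. aform_eval (Suc N) f (x(N := r)) > 0"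
  proof (intro eventually_ball_finite ballI \<open>finite P\<close>)
    fix f assume "f \<in> P"
    have "((\<lambda>r. aform_eval N f x + snd f N * r) \<longlongrightarrow> aform_eval (Suc N) f x) (nhds (x N))"
      unfolding aform_eval_Suc by (intro tendsto_intros filterlim_ident)
    from order_tendstoD(1)[OF this] show "\<forall>\<^sub>F r in nhds (x N). aform_eval (Suc N) f (x(N := r)) > 0"
      using pos \<open>f \<in> P\<close> by (simp add: aform_eval_Suc)
  qed
  then obtain d where "d > 0" and d: "\<And>r. dist r (x N) < d \<Longrightarrow> \<forall>f\<in>P. aform_eval (Suc N) f (x(N := r)) > 0"
    unfolding eventually_nhds_metric by blast
  obtain r where "r \<in> \<rat>" "x N - d < r" "r < x N + d"
    using Rats_dense_in_real[of "x N - d" "x N + d"] \<open>d > 0\<close> by auto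
  then have "dist r (x N) < d" by (simp add: dist_real_def abs_less_iff)
  then show ?thesis using d \<open>r \<in> \<rat>\<close> by blast
qed

lemma ex_rational_solution_eliminate:
  assumes eN: "snd e N \<noteq> 0" and "rational_aform e"
    and "\<exists>y. (\<forall>i. y i \<in> \<rat>) \<and> aform_solves N (aform_eliminate e N ` E) (aform_eliminate e N ` P) y"
  shows "\<exists>y. (\<forall>i. y i \<in> \<rat>) \<and> aform_solves (Suc N) E P y"
proof -
  obtain y where y: "\<forall>i. y i \<in> \<rat>"
    and sol: "aform_solves N (aform_eliminate e N ` E) (aform_eliminate e N ` P) y"
    using assms(3) by blast
  define y' where "y' = y(N := - aform_eval N e y / snd e N)"
  have "\<forall>i. y' i \<in> \<rat>"
    using y aform_eval_rational[OF \<open>rational_aform e\<close>, of y N] \<open>rational_aform e\<close>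
    by (auto simp: y'_def rational_aform_def)
  moreover have "aform_solves (Suc N) E P y'"
    using sol by (subst (asm) aform_solves_image[OF aform_eval_eliminate[OF eN]]) (simp add: y'_def)
  ultimately show ?thesis by blast
qed

lemma ex_rational_solution_instantiate:
  assumes "r \<in> \<rat>"
    and "\<exists>y. (\<forall>i. y i \<in> \<rat>) \<and> aform_solves N (aform_instantiate N r ` E) (aform_instantiate N r ` P) y"
  shows "\<exists>y. (\<forall>i. y i \<in> \<rat>) \<and> aform_solves (Suc N) E P y"
proof -
  obtain y where "\<forall>i. y i \<in> \<rat>"
    and "aform_solves N (aform_instantiate N r ` E) (aform_instantiate N r ` P) y"
    using assms(2) by blast
  then have "(\<forall>i. (y(N := r)) i \<in> \<rat>) \<and> aform_solves (Suc N) E P (y(N := r))"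
    using \<open>r \<in> \<rat>\<close> by (simp add: aform_solves_image[OF aform_eval_instantiate])
  then show ?thesis by blast
qed

text \<open>If some equation involves \<open>z\<^sub>N\<close>, it is solved for
  \<open>z\<^sub>N\<close> and substituted into all other forms; otherwise \<open>z\<^sub>N\<close> occurs only in the finitely many
  strict inequalities, and can be replaced by a nearby rational number.\<close>

lemma aform_solves_rational:
  assumes "finite P" and "\<forall>f\<in>E \<union> P. rational_aform f" and "aform_solves N E P x"
  shows "\<exists>y. (\<forall>i. y i \<in> \<rat>) \<and> aform_solves N E P y"
  using assms
proof (induction N arbitrary: E P x)
  case 0
  then show ?case by (intro exI[of _ "\<lambda>_. 0"]) (simp add: aform_solves_def aform_eval_def)
next
  case (Suc N)
  show ?case
  proof (cases "\<exists>e\<in>E. snd e N \<noteq> 0")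
    case True
    then obtain e where "e \<in> E" and eN: "snd e N \<noteq> 0" by blast
    let ?elim = "aform_eliminate e N"
    have "rational_aform e" using Suc.prems(2) \<open>e \<in> E\<close> by blast
    show ?thesis
    proof (intro ex_rational_solution_eliminate[OF eN \<open>rational_aform e\<close>] Suc.IH)
      show "finite (?elim ` P)" using Suc.prems(1) by simp
      have "rational_aform (?elim f)" if "f \<in> E \<union> P" for f
        using Suc.prems(2) \<open>rational_aform e\<close> that by (simp add: rational_aform_eliminate)
      then show "\<forall>f\<in>?elim ` E \<union> ?elim ` P. rational_aform f" by blast
      have "aform_eval N e x + snd e N * x N = 0"
        using Suc.prems(3) \<open>e \<in> E\<close> by (simp add: aform_solves_def aform_eval_Suc)
      then have "x(N := - aform_eval N e x / snd e N) = x"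
        using eN by (auto simp: field_simps)
      then show "aform_solves N (?elim ` E) (?elim ` P) x"
        using Suc.prems(3) by (subst aform_solves_image[OF aform_eval_eliminate[OF eN]]) simp
    qed
  next
    case False
    obtain r where "r \<in> \<rat>" and r: "\<forall>f\<in>P. aform_eval (Suc N) f (x(N := r)) > 0"
      using ex_rational_update_keeps_pos[OF Suc.prems(1)] Suc.prems(3) unfolding aform_solves_def by blast
    let ?inst = "aform_instantiate N r"
    show ?thesis
    proof (intro ex_rational_solution_instantiate[OF \<open>r \<in> \<rat>\<close>] Suc.IH)
      show "finite (?inst ` P)" using Suc.prems(1) by simp
      have "rational_aform (?inst f)" if "f \<in> E \<union> P" for f
        using Suc.prems(2) \<open>r \<in> \<rat>\<close> that by (simp add: rational_aform_instantiate)
      then show "\<forall>f\<in>?inst ` E \<union> ?inst ` P. rational_aform f" by blast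
      have "aform_eval (Suc N) f (x(N := r)) = 0" if "f \<in> E" for f
        using False Suc.prems(3) that by (auto simp: aform_solves_def aform_eval_Suc)
      then show "aform_solves N (?inst ` E) (?inst ` P) x"
        using r by (simp add: aform_eval_instantiate aform_solves_def)
    qed
  qed
qed

definition sum_diff_form :: "nat set \<Rightarrow> nat set \<Rightarrow> aform" where
  "sum_diff_form A B = (0, \<lambda>i. of_bool (i \<in> A) - of_bool (i \<in> B))"

definition coord_form :: "nat \<Rightarrow> aform" where
  "coord_form j = (0, \<lambda>i. of_bool (i = j))"

lemma aform_eval_sum_diff_form:
  assumes "A \<subseteq> {..<L}" and "B \<subseteq> {..<L}"
  shows "aform_eval L (sum_diff_form A B) z = sum z A - sum z B"
proof -
  have "{..<L} \<inter> A = A" "{..<L} \<inter> B = B" using assms by auto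
  then show ?thesis
    by (simp add: aform_eval_def sum_diff_form_def left_diff_distrib sum_subtractf Int_def)
qed

lemma aform_eval_coord_form: "j < L \<Longrightarrow> aform_eval L (coord_form j) z = z j"
  by (simp add: aform_eval_def coord_form_def)

definition sum_eq_forms :: "nat \<Rightarrow> (nat \<Rightarrow> real) \<Rightarrow> aform set" where
  "sum_eq_forms L x =
     {sum_diff_form A B | A B. A \<subseteq> {..<L} \<and> B \<subseteq> {..<L} \<and> sum x A = sum x B}"

definition sum_gt_forms :: "nat \<Rightarrow> (nat \<Rightarrow> real) \<Rightarrow> aform set" where
  "sum_gt_forms L x =
     {sum_diff_form A B | A B. A \<subseteq> {..<L} \<and> B \<subseteq> {..<L} \<and> sum x A > sum x B}
     \<union> coord_form ` {..<L}"

lemma finite_sum_gt_forms: "finite (sum_gt_forms L x)"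
proof -
  have "{sum_diff_form A B | A B. A \<subseteq> {..<L} \<and> B \<subseteq> {..<L} \<and> sum x A > sum x B}
          \<subseteq> case_prod sum_diff_form ` (Pow {..<L} \<times> Pow {..<L})"
    by auto
  moreover have "finite (case_prod sum_diff_form ` (Pow {..<L} \<times> Pow {..<L}))" by simp
  ultimately show ?thesis unfolding sum_gt_forms_def by (simp add: finite_subset)
qed

lemma aform_solves_sum_forms_self:
  assumes "\<forall>i<L. x i > 0"
  shows "aform_solves L (sum_eq_forms L x) (sum_gt_forms L x) x"
proof -
  have "aform_eval L f x = 0" if "f \<in> sum_eq_forms L x" for f
    using that by (auto simp: sum_eq_forms_def aform_eval_sum_diff_form)
  moreover have "aform_eval L f x > 0" if "f \<in> sum_gt_forms L x" for f
    using that assms by (auto simp: sum_gt_forms_def aform_eval_sum_diff_form aform_eval_coord_form)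
  ultimately show ?thesis unfolding aform_solves_def by blast
qed

lemma sum_forms_solution_pos:
  assumes "aform_solves L (sum_eq_forms L x) (sum_gt_forms L x) y" and "i < L"
  shows "y i > 0"
proof -
  have "coord_form i \<in> sum_gt_forms L x" using \<open>i < L\<close> by (simp add: sum_gt_forms_def)
  from aform_solvesD(2)[OF assms(1) this] show ?thesis
    using \<open>i < L\<close> by (simp add: aform_eval_coord_form)
qed

lemma sum_forms_solution_sum_eq_iff:
  assumes sol: "aform_solves L (sum_eq_forms L x) (sum_gt_forms L x) y"
    and A: "A \<subseteq> {..<L}" and B: "B \<subseteq> {..<L}"
  shows "sum y A = sum y B \<longleftrightarrow> sum x A = sum x B"
proof (cases "sum x A = sum x B")
  case True
  then have "sum_diff_form A B \<in> sum_eq_forms L x"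
    using A B unfolding sum_eq_forms_def by blast
  from aform_solvesD(1)[OF sol this] True show ?thesis
    by (simp add: aform_eval_sum_diff_form[OF A B])
next
  case False
  have "sum y C \<noteq> sum y D" if "C \<subseteq> {..<L}" "D \<subseteq> {..<L}" "sum x C > sum x D" for C D
  proof -
    have "sum_diff_form C D \<in> sum_gt_forms L x"
      using that unfolding sum_gt_forms_def by blast
    from aform_solvesD(2)[OF sol this] show ?thesis
      by (simp add: aform_eval_sum_diff_form[OF that(1,2)])
  qed
  moreover have "sum x A > sum x B \<or> sum x B > sum x A"
    using False by linarith
  ultimately show ?thesis using A B False by metis
qed

lemma rational_sum_forms: "\<forall>f\<in>sum_eq_forms L x \<union> sum_gt_forms L x. rational_aform f"
proof -
  have "rational_aform (sum_diff_form A B)" "rational_aform (coord_form j)" for A B j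
    by (simp_all add: rational_aform_def sum_diff_form_def coord_form_def)
  then show ?thesis unfolding sum_eq_forms_def sum_gt_forms_def by blast
qed

lemma cardinal_range_eqI:
  fixes xs :: "'a::comm_monoid_add list" and zs :: "'b::comm_monoid_add list"
  assumes len: "length xs = length zs"
    and eq: "\<And>A B. A \<subseteq> {..<length xs} \<Longrightarrow> B \<subseteq> {..<length xs} \<Longrightarrow>
               (\<Sum>n\<in>A. xs ! n) = (\<Sum>n\<in>B. xs ! n) \<longleftrightarrow> (\<Sum>n\<in>A. zs ! n) = (\<Sum>n\<in>B. zs ! n)"
  shows "cardinal_range xs = cardinal_range zs"
proof -
  have range: "cardinal_range ws = (\<lambda>A. cardinal_fun ws (\<Sum>n\<in>A. ws ! n)) ` Pow {..<length ws}"
    for ws :: "'c::comm_monoid_add list"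
    by (auto simp: cardinal_range_def achievement_set_def atLeast0LessThan)
  have "cardinal_fun xs (\<Sum>n\<in>A. xs ! n) = cardinal_fun zs (\<Sum>n\<in>A. zs ! n)"
    if "A \<subseteq> {..<length xs}" for A
    unfolding cardinal_fun_def atLeast0LessThan using eq[OF _ that] len
    by (intro arg_cong[where f = card] Collect_cong) auto
  then show ?thesis unfolding range len[symmetric] by (intro image_cong) auto
qed

lemma cardinal_range_map_mult:
  fixes xs :: "'a::field list"
  assumes "c \<noteq> 0"
  shows "cardinal_range (map ((*) c) xs) = cardinal_range xs"
proof (rule cardinal_range_eqI)
  fix A B assume "A \<subseteq> {..<length (map ((*) c) xs)}" "B \<subseteq> {..<length (map ((*) c) xs)}"
  then have "(\<Sum>n\<in>C. map ((*) c) xs ! n) = c * (\<Sum>n\<in>C. xs ! n)" if "C \<in> {A, B}" for C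
    using that by (auto simp: sum_distrib_left intro!: sum.cong)
  then show "(\<Sum>n\<in>A. map ((*) c) xs ! n) = (\<Sum>n\<in>B. map ((*) c) xs ! n)
               \<longleftrightarrow> (\<Sum>n\<in>A. xs ! n) = (\<Sum>n\<in>B. xs ! n)"
    using assms by simp
qed simp

lemma ex_positive_rational_same_cardinal_range:
  fixes xs :: "real list"
  assumes "\<forall>x\<in>set xs. x > 0"
  shows "\<exists>qs :: real list. (\<forall>q\<in>set qs. q \<in> \<rat> \<and> q > 0) \<and> cardinal_range qs = cardinal_range xs"
proof -
  define L where "L = length xs"
  define x where "x = (!) xs"
  have "aform_solves L (sum_eq_forms L x) (sum_gt_forms L x) x"
    using assms by (intro aform_solves_sum_forms_self) (auto simp: x_def L_def)
  from aform_solves_rational[OF finite_sum_gt_forms rational_sum_forms this]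
  obtain y where rat: "\<forall>i. y i \<in> \<rat>"
    and sol: "aform_solves L (sum_eq_forms L x) (sum_gt_forms L x) y"
    by blast
  define qs where "qs = map y [0..<L]"
  have qs_sum: "(\<Sum>n\<in>C. qs ! n) = sum y C" if "C \<subseteq> {..<L}" for C
    using that by (auto simp: qs_def intro!: sum.cong)
  have "\<forall>q\<in>set qs. q \<in> \<rat> \<and> q > 0"
    using rat sum_forms_solution_pos[OF sol] by (auto simp: qs_def)
  moreover have "cardinal_range qs = cardinal_range xs"
  proof (rule cardinal_range_eqI)
    show "length qs = length xs" by (simp add: qs_def L_def)
    fix A B assume "A \<subseteq> {..<length qs}" and "B \<subseteq> {..<length qs}"
    then have A: "A \<subseteq> {..<L}" and B: "B \<subseteq> {..<L}" by (simp_all add: qs_def)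
    show "(\<Sum>n\<in>A. qs ! n) = (\<Sum>n\<in>B. qs ! n) \<longleftrightarrow> (\<Sum>n\<in>A. xs ! n) = (\<Sum>n\<in>B. xs ! n)"
      using sum_forms_solution_sum_eq_iff[OF sol A B] by (simp add: qs_sum[OF A] qs_sum[OF B] x_def)
  qed
  ultimately show ?thesis by blast
qed

lemma Rats_common_denominator:
  fixes S :: "'a::field_char_0 set"
  assumes "finite S" and "S \<subseteq> \<rat>"
  shows "\<exists>D::nat. D > 0 \<and> (\<forall>q\<in>S. of_nat D * q \<in> \<int>)"
  using assms
proof (induction S rule: finite_induct)
  case empty
  show ?case by (intro exI[of _ 1]) simp
next
  case (insert q S)
  then obtain D :: nat where "D > 0" and D: "\<forall>p\<in>S. of_nat D * p \<in> \<int>" by auto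
  obtain a b where "b > 0" and q: "q = of_int a / of_int b"
    using insert.prems by (auto elim: Rats_cases')
  have Db: "of_nat (D * nat b) = (of_int b * of_nat D :: 'a)"
    using \<open>b > 0\<close> by simp
  have "of_nat (D * nat b) * q = of_int (int D * a)"
    using \<open>b > 0\<close> unfolding Db q by simp
  moreover have "of_nat (D * nat b) * p \<in> \<int>" if "p \<in> S" for p
    unfolding Db mult.assoc using D that by (simp add: Ints_mult)
  ultimately have "\<forall>p\<in>insert q S. of_nat (D * nat b) * p \<in> \<int>"
    by (metis Ints_of_int insert_iff)
  then show ?case using \<open>D > 0\<close> \<open>b > 0\<close> by (intro exI[of _ "D * nat b"]) simp
qed

lemma scale_positive_rationals_to_nats:
  fixes qs :: "real list"
  assumes "\<forall>q\<in>set qs. q \<in> \<rat> \<and> q > 0"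
  obtains D :: nat and ns :: "nat list"
  where "D > 0" and "\<forall>n\<in>set ns. n > 0" and "map real ns = map ((*) (real D)) qs"
proof -
  obtain D :: nat where "D > 0" and D: "\<forall>q\<in>set qs. real D * q \<in> \<int>"
    using Rats_common_denominator[of "set qs"] assms by auto
  define ns where "ns = map (\<lambda>q. nat \<lfloor>real D * q\<rfloor>) qs"
  have scaled: "real (nat \<lfloor>real D * q\<rfloor>) = real D * q" if "q \<in> set qs" for q
    using D assms \<open>D > 0\<close> that by (auto elim!: Ints_cases)
  then have "map real ns = map ((*) (real D)) qs"
    by (simp add: ns_def)
  moreover have "n > 0" if "n \<in> set ns" for n
  proof -
    obtain q where "q \<in> set qs" and n: "n = nat \<lfloor>real D * q\<rfloor>"
      using \<open>n \<in> set ns\<close> by (auto simp: ns_def)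
    then have "real n = real D * q" using scaled by simp
    also have "\<dots> > 0" using assms \<open>q \<in> set qs\<close> \<open>D > 0\<close> by simp
    finally show ?thesis by simp
  qed
  ultimately show ?thesis using that \<open>D > 0\<close> by blast
qed

theorem theorem8p1:
  assumes "M \<in> family_F"
  shows "\<exists>ns :: nat list. (\<forall>n\<in>set ns. n > 0) \<and>
           M = cardinal_range (map real ns)"
proof -
  obtain xs :: "real list" where "M = cardinal_range xs" and "\<forall>x\<in>set xs. x > 0"
    using assms unfolding family_F_def by auto
  then obtain qs :: "real list" where qs: "\<forall>q\<in>set qs. q \<in> \<rat> \<and> q > 0"
    and "cardinal_range qs = M"
    using ex_positive_rational_same_cardinal_range by blast
  obtain D ns where "D > 0" and pos: "\<forall>n\<in>set ns. n > 0"
    and ns: "map real ns = map ((*) (real D)) qs"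
    using scale_positive_rationals_to_nats[OF qs] .
  have "cardinal_range (map ((*) (real D)) qs) = cardinal_range qs"
    using \<open>D > 0\<close> by (intro cardinal_range_map_mult) simp
  then have "M = cardinal_range (map real ns)"
    unfolding ns using \<open>cardinal_range qs = M\<close> by simp
  with pos show ?thesis by blast
qed

end
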